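(* Fix a user $u$, a set of action items $\Omega_u^{\mathcal{A}}$ with real-valued actions, so that $\mathcal{A}_u=\mathbb{R}^{|\Omega_u^{\mathcal{A}}|}$, and a set of target items $\Omega_u^t$ containing item $i$. Let the score update be affine, $\phi_u(\vec a) = B_u\vec a + \vec c_u$ with $B_u\in\mathbb{R}^{m\times|\Omega_u^{\mathcal{A}}|}$ and $\vec c_u\in\mathbb{R}^m$, and let $\vec b_{uj}^\top$ be the $j$-th row of $B_u$. Suppose $\vec b_{ui}$ is a vertex of the convex hull of $\{\vec b_{uj}\}_{j\in\Omega_u^t}$, i.e. $\vec b_{ui}\notin\mathrm{conv}(\{\vec b_{uj}\}_{j\in\Omega_u^t}\setminus\{\vec b_{ui}\})$. For $\beta>0$ let \[\rho^\star_\beta(u,i)=\max_{\vec a\in\mathcal{A}_u}\frac{e^{\beta(\vec b_{ui}^\top\vec a + c_{ui})}}{\sum_{j\in\Omega_u^t}e^{\beta(\vec b_{uj}^\top\vec a + c_{uj})}}.\] Then $\rho^\star_\beta(u,i)\to 1$ as $\beta\to\infty$.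
   Context: $\rho^\star_\beta(u,i)$ is the maximum probability that item $i$ is recommended to user $u$. This is computed under the $\beta$-soft-max selection rule over the target items $\Omega_u^t$, after the user strategically sets the ratings of the action items to $\vec a$. The resulting score vector is $\phi_u(\vec a)=B_u\vec a+\vec c_u$. *)

theory Defs
  imports "HOL-Analysis.Analysis"
begin

text \<open>Affine score update: item j gets score  b j \<bullet> a + c j  (b j is the j-th row of B_u).
  Soft-max probability of recommending item i among the target items T at temperature beta.\<close>
definition softmax_prob ::
  "real \<Rightarrow> ('i \<Rightarrow> real^'n) \<Rightarrow> ('i \<Rightarrow> real) \<Rightarrow> 'i set \<Rightarrow> 'i \<Rightarrow> real^'n \<Rightarrow> real" where
  "softmax_prob beta b c T i a =
     exp (beta * (b i \<bullet> a + c i)) / (\<Sum>j\<in>T. exp (beta * (b j \<bullet> a + c j)))"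

definition rho_star ::
  "real \<Rightarrow> ('i \<Rightarrow> real^'n) \<Rightarrow> ('i \<Rightarrow> real) \<Rightarrow> 'i set \<Rightarrow> 'i \<Rightarrow> real" where
  "rho_star beta b c T i = (SUP a\<in>UNIV. softmax_prob beta b c T i a)"

end

theory Submission
  imports Defs
begin

text \<open>Since \<open>b i\<close> lies outside the convex hull of the other rows, some direction \<open>d\<close> satisfies
  \<open>b j \<bullet> d < b i \<bullet> d\<close> for all \<open>j \<noteq> i\<close>. Along the ray \<open>t *\<^sub>R d\<close> the soft-max weights of all competitors
  then vanish relative to that of \<open>i\<close>, so for every \<open>\<beta> > 0\<close> the supremum \<open>\<rho>\<^sup>\<star>\<^sub>\<beta>(u,i)\<close> already equals 1
  (without being attained), and the limit is immediate.\<close>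

lemma separating_direction_outside_convex_hull:
  fixes x :: "'a::euclidean_space"
  assumes "finite S" and "x \<notin> convex hull S"
  obtains d where "\<And>y. y \<in> S \<Longrightarrow> (y - x) \<bullet> d < 0"
proof -
  have "closed (convex hull S)"
    using assms(1) by (simp add: compact_imp_closed finite_imp_compact_convex_hull)
  then obtain a z where "a \<bullet> x < z" and "\<forall>y\<in>convex hull S. a \<bullet> y > z"
    using separating_hyperplane_closed_point[OF convex_convex_hull _ assms(2)] by blast
  show thesis
  proof (rule that)
    fix y assume "y \<in> S"
    then have "a \<bullet> y > z"
      using \<open>\<forall>y\<in>convex hull S. a \<bullet> y > z\<close> hull_inc[of y S] by blast
    then show "(y - x) \<bullet> (- a) < 0"
      using \<open>a \<bullet> x < z\<close> by (simp add: inner_diff_right inner_commute)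
  qed
qed

lemma exp_linear_tendsto_0:
  fixes k e :: real
  assumes "k < 0"
  shows "((\<lambda>t. exp (k * t + e)) \<longlongrightarrow> 0) at_top"
proof -
  have "filterlim (\<lambda>t. k * t) at_bot at_top"
    by (rule filterlim_tendsto_neg_mult_at_bot[OF tendsto_const assms filterlim_ident])
  then have "filterlim (\<lambda>t. e + k * t) at_bot at_top"
    using filterlim_tendsto_add_at_bot_iff[OF tendsto_const] by blast
  then have "filterlim (\<lambda>t. k * t + e) at_bot at_top"
    by (simp add: add.commute)
  then show ?thesis by (rule filterlim_compose[OF exp_at_bot])
qed

lemma softmax_prob_eq_relative:
  assumes "finite T" and "i \<in> T"
  shows "softmax_prob beta b c T i a =
    1 / (1 + (\<Sum>j\<in>T - {i}. exp (beta * ((b j - b i) \<bullet> a + (c j - c i)))))"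
proof -
  let ?w = "\<lambda>j. exp (beta * (b j \<bullet> a + c j))"
  have w: "?w j = ?w i * exp (beta * ((b j - b i) \<bullet> a + (c j - c i)))" for j
  proof -
    have "beta * (b j \<bullet> a + c j) = beta * (b i \<bullet> a + c i) + beta * ((b j - b i) \<bullet> a + (c j - c i))"
      by (simp add: inner_diff_left algebra_simps)
    then show ?thesis
      by (simp only: mult_exp_exp)
  qed
  have "(\<Sum>j\<in>T. ?w j) = ?w i + (\<Sum>j\<in>T - {i}. ?w j)"
    using assms by (simp add: sum.remove)
  also have "\<dots> = ?w i * (1 + (\<Sum>j\<in>T - {i}. exp (beta * ((b j - b i) \<bullet> a + (c j - c i)))))"
    by (subst w) (simp add: sum_distrib_left distrib_left)
  finally show ?thesis
    unfolding softmax_prob_def by simp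
qed

lemma softmax_prob_le_1:
  assumes "finite T" and "i \<in> T"
  shows "softmax_prob beta b c T i a \<le> 1"
  unfolding softmax_prob_eq_relative[OF assms] by (simp add: sum_nonneg divide_le_eq_1 add_pos_nonneg)

lemma softmax_prob_tendsto_1_along_ray:
  assumes "finite T" and "i \<in> T" and "beta > 0"
    and d: "\<And>j. j \<in> T - {i} \<Longrightarrow> (b j - b i) \<bullet> d < 0"
  shows "((\<lambda>t. softmax_prob beta b c T i (t *\<^sub>R d)) \<longlongrightarrow> 1) at_top"
proof -
  have "((\<lambda>t. \<Sum>j\<in>T - {i}. exp (beta * ((b j - b i) \<bullet> d) * t + beta * (c j - c i)))
      \<longlongrightarrow> 0) at_top"
  proof (rule tendsto_null_sum)
    fix j assume "j \<in> T - {i}"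
    then have "beta * ((b j - b i) \<bullet> d) < 0"
      using d \<open>beta > 0\<close> by (simp add: mult_pos_neg)
    then show "((\<lambda>t. exp (beta * ((b j - b i) \<bullet> d) * t + beta * (c j - c i))) \<longlongrightarrow> 0) at_top"
      by (rule exp_linear_tendsto_0)
  qed
  then have "((\<lambda>t. 1 / (1 + (\<Sum>j\<in>T - {i}. exp (beta * ((b j - b i) \<bullet> d) * t + beta * (c j - c i)))))
      \<longlongrightarrow> 1 / (1 + 0)) at_top"
    by (intro tendsto_intros) auto
  then show ?thesis
    unfolding softmax_prob_eq_relative[OF assms(1,2)] by (simp add: algebra_simps)
qed

lemma rho_star_eq_1:
  assumes "finite T" and "i \<in> T" and "beta > 0"
    and "\<And>j. j \<in> T - {i} \<Longrightarrow> (b j - b i) \<bullet> d < 0"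
  shows "rho_star beta b c T i = 1"
proof (rule antisym)
  show "rho_star beta b c T i \<le> 1"
    unfolding rho_star_def by (rule cSUP_least) (auto intro: softmax_prob_le_1 assms)
  have "bdd_above (range (softmax_prob beta b c T i))"
    using softmax_prob_le_1[OF assms(1,2)] by (rule bdd_aboveI2)
  then have "\<forall>\<^sub>F t in at_top. softmax_prob beta b c T i (t *\<^sub>R d) \<le> rho_star beta b c T i"
    unfolding rho_star_def by (simp add: cSUP_upper)
  moreover have "((\<lambda>t. softmax_prob beta b c T i (t *\<^sub>R d)) \<longlongrightarrow> 1) at_top"
    by (rule softmax_prob_tendsto_1_along_ray) (use assms in auto)
  ultimately show "1 \<le> rho_star beta b c T i"
    by (intro tendsto_le[OF _ tendsto_const]) simp_all
qed

theorem proposition2: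
  fixes b :: "'i \<Rightarrow> real^'n" and c :: "'i \<Rightarrow> real" and T :: "'i set" and i :: 'i
  assumes "finite T" and "i \<in> T"
    and "b i \<notin> convex hull {b j | j. j \<in> T \<and> j \<noteq> i}"
  shows "((\<lambda>beta. rho_star beta b c T i) \<longlongrightarrow> 1) at_top"
proof -
  have "finite {b j | j. j \<in> T \<and> j \<noteq> i}"
    using assms(1) by simp
  then obtain d where "\<And>y. y \<in> {b j | j. j \<in> T \<and> j \<noteq> i} \<Longrightarrow> (y - b i) \<bullet> d < 0"
    using separating_direction_outside_convex_hull assms(3) by blast
  then have d: "\<And>j. j \<in> T - {i} \<Longrightarrow> (b j - b i) \<bullet> d < 0"
    by blast
  have "\<forall>\<^sub>F beta in at_top. rho_star beta b c T i = 1"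
    using eventually_gt_at_top[of 0] by eventually_elim (rule rho_star_eq_1; use assms d in auto)
  then show ?thesis
    by (rule tendsto_eventually)
qed

end
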